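(* Let $\sigma$ be a signature containing $\triangleright$ and let $\mathcal{A}$ be a $\sigma$-algebra that is representable by partial functions. Then for every $a \in \mathcal{A}$, the set ${\downarrow}a = \{b \in \mathcal{A} : b \le a\}$, with least element $0$, greatest element $a$, meet given by $\lhd$ and complementation given by $\overline{b} := b \triangleright a$, is a Boolean algebra. Any representation $\theta$ of $\mathcal{A}$ by partial functions restricts to a representation of the Boolean algebra ${\downarrow}a$ as a field of sets over $\theta(a)$ (i.e. $\theta$ maps ${\downarrow}a$ injectively to subsets of $\theta(a)$, sending $\lhd$ to $\cap$, complement to complement relative to $\theta(a)$, $0$ to $\emptyset$ and $a$ to $\theta(a)$). Moreover, this restricted representation of ${\downarrow}a$ is complete (i.e. preserves all existing meets of nonempty subsets as intersections and all existing joins as unions) if either (1) $\theta$ is a meet-complete representation of $\mathcal{A}$, or (2) $\sigma$ contains $\wedge$ and $\theta$ is a join-complete representation of $\mathcal{A}$.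
   Context: Signatures $\sigma$ are sets of operation symbols drawn from: $\triangleright$ (antidomain restriction, binary), $;$ (composition, binary), $\wedge$ (intersection, binary), $\mathrm{upd}$ (update, binary), $\sqcup$ (preferential union, binary), $\mathsf{D}$ (domain, unary), $\mathsf{A}$ (antidomain, unary). An algebra of partial functions of signature $\sigma$ is a $\sigma$-algebra whose elements are partial functions on a set $X$ (the union of all their domains and ranges), with operations: $f \triangleright g = \{(x,y) \in g : x \notin \mathrm{dom}(f)\}$; $f ; g = \{(x,z) : \exists y\,((x,y)\in f, (y,z) \in g)\}$; $f \wedge g = f \cap g$; $\mathrm{upd}(f,g)(x)$ equals $f(x)$ if $f(x)$ is defined and $g(x)$ undefined, equals $g(x)$ if both are defined, and is undefined otherwise; $(f \sqcup g)(x)$ equals $f(x)$ if defined, else $g(x)$ if defined, else undefined; $\mathsf{D}(f)$ is the identity on $\mathrm{dom}(f)$; $\mathsf{A}(f)$ is the identity on $X \setminus \mathrm{dom}(f)$. A representation of a $\sigma$-algebra $\mathcal{A}$ by partial functions is an isomorphism from $\mathcal{A}$ onto an algebra of partial functions of signature $\sigma$; $\mathcal{A}$ is representable if one exists. In any algebra with $\triangleright$, define $0 := a \triangleright a$ and $a \lhd b := (a \triangleright b) \triangleright b$ (in partial functions: restriction of $b$ to $\mathrm{dom}(a)$), and $a \le b :\iff a \lhd b = a$. For representable algebras $\le$ is a partial order with least element $0$, and every representation $\theta$ satisfies $a \le b \iff \theta(a) \subseteq \theta(b)$. A representation $\theta$ is join complete if for every subset $S$ for which $\bigvee S$ exists,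 $\theta(\bigvee S) = \bigcup \theta[S]$; it is meet complete if for every nonempty subset $S$ for which $\bigwedge S$ exists, $\theta(\bigwedge S) = \bigcap \theta[S]$. *)

theory Defs
  imports Main
begin

datatype opsym = ARes | Comp | Mt | Upd | Pref | Dom | ADom

text \<open>An algebra of (some subset of) the signature.  Only the fields whose
  symbol belongs to the signature sigma are relevant; the others are ignored.\<close>
record 'a palg =
  carrier :: "'a set"
  ares :: "'a \<Rightarrow> 'a \<Rightarrow> 'a"
  comp :: "'a \<Rightarrow> 'a \<Rightarrow> 'a"
  mt   :: "'a \<Rightarrow> 'a \<Rightarrow> 'a"
  upd  :: "'a \<Rightarrow> 'a \<Rightarrow> 'a"
  pref :: "'a \<Rightarrow> 'a \<Rightarrow> 'a"
  dm   :: "'a \<Rightarrow> 'a"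
  adm  :: "'a \<Rightarrow> 'a"

definition closed_alg :: "opsym set \<Rightarrow> 'a palg \<Rightarrow> bool" where
  "closed_alg \<sigma> A \<longleftrightarrow>
     (ARes \<in> \<sigma> \<longrightarrow> (\<forall>a\<in>carrier A. \<forall>b\<in>carrier A. ares A a b \<in> carrier A)) \<and>
     (Comp \<in> \<sigma> \<longrightarrow> (\<forall>a\<in>carrier A. \<forall>b\<in>carrier A. comp A a b \<in> carrier A)) \<and>
     (Mt \<in> \<sigma> \<longrightarrow> (\<forall>a\<in>carrier A. \<forall>b\<in>carrier A. mt A a b \<in> carrier A)) \<and>
     (Upd \<in> \<sigma> \<longrightarrow> (\<forall>a\<in>carrier A. \<forall>b\<in>carrier A. upd A a b \<in> carrier A)) \<and>
     (Pref \<in> \<sigma> \<longrightarrow> (\<forall>a\<in>carrier A. \<forall>b\<in>carrier A. pref A a b \<in> carrier A)) \<and>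
     (Dom \<in> \<sigma> \<longrightarrow> (\<forall>a\<in>carrier A. dm A a \<in> carrier A)) \<and>
     (ADom \<in> \<sigma> \<longrightarrow> (\<forall>a\<in>carrier A. adm A a \<in> carrier A))"

definition pf_ares :: "('x \<times> 'x) set \<Rightarrow> ('x \<times> 'x) set \<Rightarrow> ('x \<times> 'x) set" where
  "pf_ares f g = {(x, y) \<in> g. x \<notin> Domain f}"

definition pf_comp :: "('x \<times> 'x) set \<Rightarrow> ('x \<times> 'x) set \<Rightarrow> ('x \<times> 'x) set" where
  "pf_comp f g = {(x, z). \<exists>y. (x, y) \<in> f \<and> (y, z) \<in> g}"

definition pf_meet :: "('x \<times> 'x) set \<Rightarrow> ('x \<times> 'x) set \<Rightarrow> ('x \<times> 'x) set" where
  "pf_meet f g = f \<inter> g"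

definition pf_upd :: "('x \<times> 'x) set \<Rightarrow> ('x \<times> 'x) set \<Rightarrow> ('x \<times> 'x) set" where
  "pf_upd f g = {(x, y) \<in> f. x \<notin> Domain g} \<union> {(x, y) \<in> g. x \<in> Domain f}"

definition pf_pref :: "('x \<times> 'x) set \<Rightarrow> ('x \<times> 'x) set \<Rightarrow> ('x \<times> 'x) set" where
  "pf_pref f g = f \<union> {(x, y) \<in> g. x \<notin> Domain f}"

definition pf_dom :: "('x \<times> 'x) set \<Rightarrow> ('x \<times> 'x) set" where
  "pf_dom f = Id_on (Domain f)"

definition pf_adom :: "'x set \<Rightarrow> ('x \<times> 'x) set \<Rightarrow> ('x \<times> 'x) set" where
  "pf_adom X f = Id_on (X - Domain f)"

definition base :: "'a palg \<Rightarrow> ('a \<Rightarrow> ('x \<times> 'x) set) \<Rightarrow> 'x set" where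
  "base A \<theta> = (\<Union>a\<in>carrier A. Field (\<theta> a))"

text \<open>theta is a representation of the sigma-algebra A: an isomorphism onto an
  algebra of partial functions (the image is then automatically closed under
  the concrete operations).\<close>
definition is_rep :: "opsym set \<Rightarrow> 'a palg \<Rightarrow> ('a \<Rightarrow> ('x \<times> 'x) set) \<Rightarrow> bool" where
  "is_rep \<sigma> A \<theta> \<longleftrightarrow> closed_alg \<sigma> A \<and> inj_on \<theta> (carrier A) \<and>
     (\<forall>a\<in>carrier A. single_valued (\<theta> a)) \<and>
     (ARes \<in> \<sigma> \<longrightarrow> (\<forall>a\<in>carrier A. \<forall>b\<in>carrier A. \<theta> (ares A a b) = pf_ares (\<theta> a) (\<theta> b))) \<and>
     (Comp \<in> \<sigma> \<longrightarrow> (\<forall>a\<in>carrier A. \<forall>b\<in>carrier A. \<theta> (comp A a b) = pf_comp (\<theta> a) (\<theta> b))) \<and>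
     (Mt \<in> \<sigma> \<longrightarrow> (\<forall>a\<in>carrier A. \<forall>b\<in>carrier A. \<theta> (mt A a b) = pf_meet (\<theta> a) (\<theta> b))) \<and>
     (Upd \<in> \<sigma> \<longrightarrow> (\<forall>a\<in>carrier A. \<forall>b\<in>carrier A. \<theta> (upd A a b) = pf_upd (\<theta> a) (\<theta> b))) \<and>
     (Pref \<in> \<sigma> \<longrightarrow> (\<forall>a\<in>carrier A. \<forall>b\<in>carrier A. \<theta> (pref A a b) = pf_pref (\<theta> a) (\<theta> b))) \<and>
     (Dom \<in> \<sigma> \<longrightarrow> (\<forall>a\<in>carrier A. \<theta> (dm A a) = pf_dom (\<theta> a))) \<and>
     (ADom \<in> \<sigma> \<longrightarrow> (\<forall>a\<in>carrier A. \<theta> (adm A a) = pf_adom (base A \<theta>) (\<theta> a)))"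

definition zero :: "'a palg \<Rightarrow> 'a \<Rightarrow> 'a" where
  "zero A a = ares A a a"

definition lres :: "'a palg \<Rightarrow> 'a \<Rightarrow> 'a \<Rightarrow> 'a" where
  "lres A a b = ares A (ares A a b) b"

definition ale :: "'a palg \<Rightarrow> 'a \<Rightarrow> 'a \<Rightarrow> bool" where
  "ale A a b \<longleftrightarrow> lres A a b = a"

definition down :: "'a palg \<Rightarrow> 'a \<Rightarrow> 'a set" where
  "down A a = {b \<in> carrier A. ale A b a}"

definition is_lub_in :: "'a palg \<Rightarrow> 'a set \<Rightarrow> 'a set \<Rightarrow> 'a \<Rightarrow> bool" where
  "is_lub_in A B S x \<longleftrightarrow> x \<in> B \<and> (\<forall>s\<in>S. ale A s x) \<and>
     (\<forall>y\<in>B. (\<forall>s\<in>S. ale A s y) \<longrightarrow> ale A x y)"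

definition is_glb_in :: "'a palg \<Rightarrow> 'a set \<Rightarrow> 'a set \<Rightarrow> 'a \<Rightarrow> bool" where
  "is_glb_in A B S x \<longleftrightarrow> x \<in> B \<and> (\<forall>s\<in>S. ale A x s) \<and>
     (\<forall>y\<in>B. (\<forall>s\<in>S. ale A y s) \<longrightarrow> ale A y x)"

definition join_complete :: "'a palg \<Rightarrow> ('a \<Rightarrow> ('x \<times> 'x) set) \<Rightarrow> bool" where
  "join_complete A \<theta> \<longleftrightarrow> (\<forall>S x. S \<subseteq> carrier A \<longrightarrow> is_lub_in A (carrier A) S x \<longrightarrow>
      \<theta> x = (\<Union>s\<in>S. \<theta> s))"

definition meet_complete :: "'a palg \<Rightarrow> ('a \<Rightarrow> ('x \<times> 'x) set) \<Rightarrow> bool" where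
  "meet_complete A \<theta> \<longleftrightarrow> (\<forall>S x. S \<subseteq> carrier A \<longrightarrow> S \<noteq> {} \<longrightarrow> is_glb_in A (carrier A) S x \<longrightarrow>
      \<theta> x = (\<Inter>s\<in>S. \<theta> s))"

definition boolean_alg ::
  "'a set \<Rightarrow> ('a \<Rightarrow> 'a \<Rightarrow> 'a) \<Rightarrow> ('a \<Rightarrow> 'a) \<Rightarrow> 'a \<Rightarrow> 'a \<Rightarrow> bool" where
  "boolean_alg B m c z t \<longleftrightarrow>
     (let j = (\<lambda>x y. c (m (c x) (c y))) in
      z \<in> B \<and> t \<in> B \<and>
      (\<forall>x\<in>B. \<forall>y\<in>B. m x y \<in> B) \<and> (\<forall>x\<in>B. c x \<in> B) \<and>
      (\<forall>x\<in>B. \<forall>y\<in>B. \<forall>w\<in>B. m (m x y) w = m x (m y w)) \<and>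
      (\<forall>x\<in>B. \<forall>y\<in>B. \<forall>w\<in>B. j (j x y) w = j x (j y w)) \<and>
      (\<forall>x\<in>B. \<forall>y\<in>B. m x y = m y x) \<and>
      (\<forall>x\<in>B. \<forall>y\<in>B. j x y = j y x) \<and>
      (\<forall>x\<in>B. \<forall>y\<in>B. m x (j x y) = x) \<and>
      (\<forall>x\<in>B. \<forall>y\<in>B. j x (m x y) = x) \<and>
      (\<forall>x\<in>B. \<forall>y\<in>B. \<forall>w\<in>B. m x (j y w) = j (m x y) (m x w)) \<and>
      (\<forall>x\<in>B. m x z = z) \<and> (\<forall>x\<in>B. m x t = x) \<and>
      (\<forall>x\<in>B. m x (c x) = z) \<and> (\<forall>x\<in>B. j x (c x) = t))"

end

theory Submission
  imports Defs
begin

text \<open>Under a representation \<open>\<theta>\<close> the order \<open>\<le>\<close> becomes inclusion, and below \<open>\<theta> a\<close>, where all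
  functions are restrictions of the single-valued \<open>\<theta> a\<close>, the operation \<open>\<lhd>\<close> becomes intersection
  and \<open>b \<triangleright> a\<close> becomes \<open>\<theta> a - \<theta> b\<close>.  So \<open>\<theta>\<close> is an injective map of \<open>\<down>a\<close> onto a field of
  subsets of \<open>\<theta> a\<close>, which makes \<open>\<down>a\<close> a Boolean algebra.  For completeness, greatest lower bounds
  of nonempty subsets of \<open>\<down>a\<close> are greatest lower bounds in the whole algebra, since \<open>\<down>a\<close> is a
  down-set; with \<open>\<and>\<close> available, least upper bounds in \<open>\<down>a\<close> are least upper bounds in the whole
  algebra, since an upper bound \<open>y\<close> can be replaced by \<open>y \<and> a\<close>.  Complementation in \<open>\<down>a\<close>
  exchanges meets and joins, so either kind of completeness of \<open>\<theta>\<close> yields both for \<open>\<down>a\<close>.\<close>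

lemma pf_ares_pf_ares: "pf_ares (pf_ares f g) g = {(x, y) \<in> g. x \<in> Domain f}"
  by (auto simp: pf_ares_def)

lemma restrict_Domain_single_valued:
  assumes "single_valued k" "f \<subseteq> k" "h \<subseteq> k"
  shows "{(x, y) \<in> h. x \<in> Domain f} = f \<inter> h"
  using assms unfolding single_valued_def by blast

lemma pf_ares_single_valued:
  assumes "single_valued g" "f \<subseteq> g"
  shows "pf_ares f g = g - f"
  using assms unfolding single_valued_def pf_ares_def by blast

lemma INT_eq_if_Diff_eq_UN_Diff:
  assumes "T - X = (\<Union>s\<in>S. T - F s)" "X \<subseteq> T" "\<forall>s\<in>S. F s \<subseteq> T" "S \<noteq> {}"
  shows "X = (\<Inter>s\<in>S. F s)"
proof (intro equalityI subsetI)
  show "p \<in> (\<Inter>s\<in>S. F s)" if "p \<in> X" for p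
    using that assms(1,2) by blast
  show "p \<in> X" if "p \<in> (\<Inter>s\<in>S. F s)" for p
    using that assms(1,3,4) by blast
qed

lemma UN_eq_if_Diff_eq_INT_Diff:
  assumes "T - X = (\<Inter>s\<in>S. T - F s)" "X \<subseteq> T" "\<forall>s\<in>S. F s \<subseteq> T"
  shows "X = (\<Union>s\<in>S. F s)"
proof (intro equalityI subsetI)
  show "p \<in> (\<Union>s\<in>S. F s)" if "p \<in> X" for p
    using that assms(1,2) by blast
  show "p \<in> X" if "p \<in> (\<Union>s\<in>S. F s)" for p
    using that assms(1,3) by blast
qed

lemma boolean_alg_field_of_sets:
  assumes "inj_on h B"
    and "\<forall>x\<in>B. \<forall>y\<in>B. m x y \<in> B \<and> h (m x y) = h x \<inter> h y"
    and "\<forall>x\<in>B. c x \<in> B \<and> h (c x) = T - h x"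
    and "\<forall>x\<in>B. h x \<subseteq> T"
    and "z \<in> B" "h z = {}" "t \<in> B" "h t = T"
  shows "boolean_alg B m c z t"
proof -
  have eq_iff: "x = y \<longleftrightarrow> h x = h y" if "x \<in> B" "y \<in> B" for x y
    using assms(1) that by (auto dest: inj_onD)
  show ?thesis
    unfolding boolean_alg_def Let_def using assms(2-8) by (simp add: eq_iff) blast
qed

locale ares_representation =
  fixes \<sigma> :: "opsym set" and A :: "'a palg" and \<theta> :: "'a \<Rightarrow> ('c \<times> 'c) set"
  assumes ARes_in_sig: "ARes \<in> \<sigma>" and is_rep: "is_rep \<sigma> A \<theta>"
begin

lemma ares_closed: "b \<in> carrier A \<Longrightarrow> c \<in> carrier A \<Longrightarrow> ares A b c \<in> carrier A"
  using is_rep ARes_in_sig unfolding is_rep_def closed_alg_def by auto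

lemma rep_ares: "b \<in> carrier A \<Longrightarrow> c \<in> carrier A \<Longrightarrow> \<theta> (ares A b c) = pf_ares (\<theta> b) (\<theta> c)"
  using is_rep ARes_in_sig unfolding is_rep_def by blast

lemma single_valued_rep: "b \<in> carrier A \<Longrightarrow> single_valued (\<theta> b)"
  using is_rep unfolding is_rep_def by blast

lemma inj_on_rep: "inj_on \<theta> (carrier A)"
  using is_rep unfolding is_rep_def by blast

lemma lres_closed: "b \<in> carrier A \<Longrightarrow> c \<in> carrier A \<Longrightarrow> lres A b c \<in> carrier A"
  unfolding lres_def by (simp add: ares_closed)

lemma rep_lres:
  "b \<in> carrier A \<Longrightarrow> c \<in> carrier A \<Longrightarrow> \<theta> (lres A b c) = {(x, y) \<in> \<theta> c. x \<in> Domain (\<theta> b)}"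
  unfolding lres_def by (simp add: rep_ares ares_closed pf_ares_pf_ares)

lemma ale_iff_subset:
  assumes b: "b \<in> carrier A" and c: "c \<in> carrier A"
  shows "ale A b c \<longleftrightarrow> \<theta> b \<subseteq> \<theta> c"
proof -
  have "ale A b c \<longleftrightarrow> \<theta> (lres A b c) = \<theta> b"
    unfolding ale_def using inj_on_rep lres_closed[OF b c] b by (auto dest: inj_onD)
  also have "\<dots> \<longleftrightarrow> \<theta> b \<subseteq> \<theta> c"
  proof
    have "\<theta> (lres A b c) \<subseteq> \<theta> c"
      using rep_lres[OF b c] by auto
    then show "\<theta> (lres A b c) = \<theta> b \<Longrightarrow> \<theta> b \<subseteq> \<theta> c"
      by simp
    show "\<theta> b \<subseteq> \<theta> c \<Longrightarrow> \<theta> (lres A b c) = \<theta> b"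
      using restrict_Domain_single_valued[OF single_valued_rep[OF c] _ order_refl]
      by (simp add: rep_lres[OF b c] Int_absorb2)
  qed
  finally show ?thesis .
qed

lemma mt_closed: "Mt \<in> \<sigma> \<Longrightarrow> b \<in> carrier A \<Longrightarrow> c \<in> carrier A \<Longrightarrow> mt A b c \<in> carrier A"
  using is_rep unfolding is_rep_def closed_alg_def by auto

lemma rep_mt: "Mt \<in> \<sigma> \<Longrightarrow> b \<in> carrier A \<Longrightarrow> c \<in> carrier A \<Longrightarrow> \<theta> (mt A b c) = \<theta> b \<inter> \<theta> c"
  using is_rep unfolding is_rep_def pf_meet_def by auto

lemma is_glb_in_iff_subset:
  assumes "B \<subseteq> carrier A" "S \<subseteq> carrier A"
  shows "is_glb_in A B S x \<longleftrightarrow> x \<in> B \<and> (\<forall>s\<in>S. \<theta> x \<subseteq> \<theta> s) \<and>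
           (\<forall>y\<in>B. (\<forall>s\<in>S. \<theta> y \<subseteq> \<theta> s) \<longrightarrow> \<theta> y \<subseteq> \<theta> x)"
  unfolding is_glb_in_def using assms ale_iff_subset by (smt (verit) subsetD)

lemma is_lub_in_iff_subset:
  assumes "B \<subseteq> carrier A" "S \<subseteq> carrier A"
  shows "is_lub_in A B S x \<longleftrightarrow> x \<in> B \<and> (\<forall>s\<in>S. \<theta> s \<subseteq> \<theta> x) \<and>
           (\<forall>y\<in>B. (\<forall>s\<in>S. \<theta> s \<subseteq> \<theta> y) \<longrightarrow> \<theta> x \<subseteq> \<theta> y)"
  unfolding is_lub_in_def using assms ale_iff_subset by (smt (verit) subsetD)

context
  fixes a assumes a_carrier: "a \<in> carrier A"
begin

lemma mem_down_iff: "b \<in> down A a \<longleftrightarrow> b \<in> carrier A \<and> \<theta> b \<subseteq> \<theta> a"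
  unfolding down_def by (auto simp: ale_iff_subset a_carrier)

lemma rep_subset_rep_top: "b \<in> down A a \<Longrightarrow> \<theta> b \<subseteq> \<theta> a"
  by (simp add: mem_down_iff)

lemma down_subset_carrier: "down A a \<subseteq> carrier A"
  unfolding down_def by blast

lemma top_in_down: "a \<in> down A a"
  using a_carrier by (simp add: mem_down_iff)

lemma rep_lres_down:
  "b \<in> down A a \<Longrightarrow> c \<in> down A a \<Longrightarrow> \<theta> (lres A b c) = \<theta> b \<inter> \<theta> c"
  using restrict_Domain_single_valued[OF single_valued_rep[OF a_carrier]]
  by (simp add: mem_down_iff rep_lres)

lemma rep_complement_down: "b \<in> down A a \<Longrightarrow> \<theta> (ares A b a) = \<theta> a - \<theta> b"
  by (simp add: mem_down_iff rep_ares pf_ares_single_valued single_valued_rep a_carrier)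

lemma rep_zero: "\<theta> (zero A a) = {}"
  unfolding zero_def using a_carrier by (simp add: rep_ares pf_ares_def Domain_iff)

lemma lres_in_down: "b \<in> down A a \<Longrightarrow> c \<in> down A a \<Longrightarrow> lres A b c \<in> down A a"
  using rep_lres_down by (auto simp: mem_down_iff lres_closed)

lemma complement_in_down: "b \<in> down A a \<Longrightarrow> ares A b a \<in> down A a"
  using rep_complement_down a_carrier by (auto simp: mem_down_iff ares_closed)

lemma zero_in_down: "zero A a \<in> down A a"
  unfolding mem_down_iff using a_carrier rep_zero by (simp add: zero_def ares_closed)

lemma boolean_alg_down: "boolean_alg (down A a) (lres A) (\<lambda>b. ares A b a) (zero A a) a"
proof (rule boolean_alg_field_of_sets)
  show "inj_on \<theta> (down A a)"
    using inj_on_rep down_subset_carrier by (rule inj_on_subset)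
  show "\<forall>b\<in>down A a. \<theta> b \<subseteq> \<theta> a"
    by (simp add: mem_down_iff)
qed (simp_all add: lres_in_down rep_lres_down complement_in_down rep_complement_down
       zero_in_down rep_zero top_in_down)

lemma is_lub_in_down_complement:
  assumes S: "S \<subseteq> down A a" and lub: "is_lub_in A (down A a) S x"
  shows "is_glb_in A (down A a) ((\<lambda>s. ares A s a) ` S) (ares A x a)"
proof -
  have S': "(\<lambda>s. ares A s a) ` S \<subseteq> carrier A"
    using S complement_in_down down_subset_carrier by blast
  have Sa: "\<forall>s\<in>S. \<theta> s \<subseteq> \<theta> a"
    using S by (auto simp: subset_iff mem_down_iff)
  have x: "x \<in> down A a" and ub: "\<forall>s\<in>S. \<theta> s \<subseteq> \<theta> x"
    and least: "\<forall>y\<in>down A a. (\<forall>s\<in>S. \<theta> s \<subseteq> \<theta> y) \<longrightarrow> \<theta> x \<subseteq> \<theta> y"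
    using lub is_lub_in_iff_subset[OF down_subset_carrier] S down_subset_carrier by auto
  have greatest: "\<theta> y \<subseteq> \<theta> a - \<theta> x"
    if y: "y \<in> down A a" and lb: "\<forall>s\<in>S. \<theta> y \<subseteq> \<theta> a - \<theta> s" for y
  proof -
    have "\<forall>s\<in>S. \<theta> s \<subseteq> \<theta> (ares A y a)"
      using lb Sa by (auto simp: rep_complement_down[OF y])
    then have "\<theta> x \<subseteq> \<theta> a - \<theta> y"
      using least complement_in_down[OF y] rep_complement_down[OF y] by metis
    then show ?thesis
      using y by (auto simp: mem_down_iff)
  qed
  have "\<forall>s\<in>S. s \<in> down A a"
    using S by blast
  then show ?thesis
    unfolding is_glb_in_iff_subset[OF down_subset_carrier S']
    using x ub greatest by (auto simp: complement_in_down rep_complement_down)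
qed

lemma is_glb_in_down_complement:
  assumes S: "S \<subseteq> down A a" and glb: "is_glb_in A (down A a) S x"
  shows "is_lub_in A (down A a) ((\<lambda>s. ares A s a) ` S) (ares A x a)"
proof -
  have S': "(\<lambda>s. ares A s a) ` S \<subseteq> carrier A"
    using S complement_in_down down_subset_carrier by blast
  have x: "x \<in> down A a" and lb: "\<forall>s\<in>S. \<theta> x \<subseteq> \<theta> s"
    and greatest: "\<forall>y\<in>down A a. (\<forall>s\<in>S. \<theta> y \<subseteq> \<theta> s) \<longrightarrow> \<theta> y \<subseteq> \<theta> x"
    using glb is_glb_in_iff_subset[OF down_subset_carrier] S down_subset_carrier by auto
  have least: "\<theta> a - \<theta> x \<subseteq> \<theta> y"
    if y: "y \<in> down A a" and ub: "\<forall>s\<in>S. \<theta> a - \<theta> s \<subseteq> \<theta> y" for y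
  proof -
    have "\<forall>s\<in>S. \<theta> (ares A y a) \<subseteq> \<theta> s"
      using ub by (auto simp: rep_complement_down[OF y])
    then have "\<theta> a - \<theta> y \<subseteq> \<theta> x"
      using greatest complement_in_down[OF y] rep_complement_down[OF y] by metis
    then show ?thesis
      by blast
  qed
  have "\<forall>s\<in>S. s \<in> down A a"
    using S by blast
  then show ?thesis
    unfolding is_lub_in_iff_subset[OF down_subset_carrier S']
    using x lb least by (auto simp: complement_in_down rep_complement_down)
qed

lemma is_glb_in_down_imp_is_glb_in_carrier:
  assumes S: "S \<subseteq> down A a" "S \<noteq> {}" and glb: "is_glb_in A (down A a) S x"
  shows "is_glb_in A (carrier A) S x"
proof -
  have Sc: "S \<subseteq> carrier A"
    using S down_subset_carrier by blast
  obtain s0 where s0: "s0 \<in> S"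
    using S by blast
  have "\<theta> s0 \<subseteq> \<theta> a"
    using s0 S rep_subset_rep_top by blast
  then have "y \<in> down A a" if "y \<in> carrier A" "\<forall>s\<in>S. \<theta> y \<subseteq> \<theta> s" for y
    using that s0 by (auto simp: mem_down_iff)
  then show ?thesis
    using glb down_subset_carrier
    unfolding is_glb_in_iff_subset[OF down_subset_carrier Sc] is_glb_in_iff_subset[OF order_refl Sc]
    by blast
qed

lemma is_lub_in_down_imp_is_lub_in_carrier:
  assumes Mt: "Mt \<in> \<sigma>" and S: "S \<subseteq> down A a" and lub: "is_lub_in A (down A a) S x"
  shows "is_lub_in A (carrier A) S x"
proof -
  have Sc: "S \<subseteq> carrier A"
    using S down_subset_carrier by blast
  have x: "x \<in> down A a"
    and least: "\<forall>y\<in>down A a. (\<forall>s\<in>S. \<theta> s \<subseteq> \<theta> y) \<longrightarrow> \<theta> x \<subseteq> \<theta> y"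
    using lub unfolding is_lub_in_iff_subset[OF down_subset_carrier Sc] by auto
  have "\<theta> x \<subseteq> \<theta> y" if y: "y \<in> carrier A" and ub: "\<forall>s\<in>S. \<theta> s \<subseteq> \<theta> y" for y
  proof -
    have y_meet_a: "mt A y a \<in> down A a" "\<theta> (mt A y a) = \<theta> y \<inter> \<theta> a"
      using mt_closed[OF Mt y a_carrier] rep_mt[OF Mt y a_carrier] by (auto simp: mem_down_iff)
    moreover have "\<forall>s\<in>S. \<theta> s \<subseteq> \<theta> (mt A y a)"
      using ub S y_meet_a(2) rep_subset_rep_top by blast
    ultimately show ?thesis
      using least by blast
  qed
  then show ?thesis
    using lub x down_subset_carrier
    unfolding is_lub_in_iff_subset[OF down_subset_carrier Sc] is_lub_in_iff_subset[OF order_refl Sc]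
    by blast
qed

lemma rep_is_glb_in_down:
  assumes complete: "meet_complete A \<theta> \<or> (Mt \<in> \<sigma> \<and> join_complete A \<theta>)"
    and S: "S \<subseteq> down A a" "S \<noteq> {}" and glb: "is_glb_in A (down A a) S x"
  shows "\<theta> x = (\<Inter>s\<in>S. \<theta> s)"
proof (cases "meet_complete A \<theta>")
  case True
  then show ?thesis
    using is_glb_in_down_imp_is_glb_in_carrier[OF S glb] S down_subset_carrier
    unfolding meet_complete_def by blast
next
  case False
  then have Mt: "Mt \<in> \<sigma>" and join: "join_complete A \<theta>"
    using complete by auto
  have x: "x \<in> down A a"
    using glb unfolding is_glb_in_def by blast
  have compl_S: "(\<lambda>s. ares A s a) ` S \<subseteq> down A a"
    using S complement_in_down by blast
  have "is_lub_in A (carrier A) ((\<lambda>s. ares A s a) ` S) (ares A x a)"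
    using is_lub_in_down_imp_is_lub_in_carrier[OF Mt compl_S is_glb_in_down_complement[OF S(1) glb]] .
  then have "\<theta> (ares A x a) = (\<Union>s\<in>S. \<theta> (ares A s a))"
    using join[unfolded join_complete_def, rule_format, OF subset_trans[OF compl_S down_subset_carrier]]
    by (simp add: image_image)
  then have "\<theta> a - \<theta> x = (\<Union>s\<in>S. \<theta> a - \<theta> s)"
    using S x by (simp add: rep_complement_down subset_iff)
  moreover have "\<theta> x \<subseteq> \<theta> a" "\<forall>s\<in>S. \<theta> s \<subseteq> \<theta> a"
    using S x rep_subset_rep_top by auto
  ultimately show ?thesis
    using S(2) by (rule INT_eq_if_Diff_eq_UN_Diff)
qed

lemma rep_is_lub_in_down:
  assumes complete: "meet_complete A \<theta> \<or> (Mt \<in> \<sigma> \<and> join_complete A \<theta>)"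
    and S: "S \<subseteq> down A a" and lub: "is_lub_in A (down A a) S x"
  shows "\<theta> x = (\<Union>s\<in>S. \<theta> s)"
proof (cases "Mt \<in> \<sigma> \<and> join_complete A \<theta>")
  case True
  then have Mt: "Mt \<in> \<sigma>" and join: "join_complete A \<theta>"
    by auto
  show ?thesis
    using join[unfolded join_complete_def, rule_format, OF subset_trans[OF S down_subset_carrier]
        is_lub_in_down_imp_is_lub_in_carrier[OF Mt S lub]] .
next
  case False
  then have meet: "meet_complete A \<theta>"
    using complete by auto
  have x: "x \<in> down A a"
    using lub unfolding is_lub_in_def by blast
  show ?thesis
  proof (cases "S = {}")
    case True
    then have "ale A x (zero A a)"
      using lub zero_in_down unfolding is_lub_in_def by simp
    moreover have "x \<in> carrier A" "zero A a \<in> carrier A"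
      using x zero_in_down down_subset_carrier by auto
    ultimately have "\<theta> x \<subseteq> \<theta> (zero A a)"
      by (simp add: ale_iff_subset)
    then show ?thesis
      using True rep_zero by simp
  next
    case False
    have compl_S: "(\<lambda>s. ares A s a) ` S \<subseteq> down A a"
      using S complement_in_down by blast
    have compl_S_nonempty: "(\<lambda>s. ares A s a) ` S \<noteq> {}"
      using False by simp
    have "is_glb_in A (carrier A) ((\<lambda>s. ares A s a) ` S) (ares A x a)"
      using is_glb_in_down_imp_is_glb_in_carrier[OF compl_S compl_S_nonempty
          is_lub_in_down_complement[OF S lub]] .
    then have "\<theta> (ares A x a) = (\<Inter>s\<in>S. \<theta> (ares A s a))"
      using meet[unfolded meet_complete_def, rule_format, OF subset_trans[OF compl_S down_subset_carrier]
          compl_S_nonempty]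
      by (simp add: image_image)
    then have "\<theta> a - \<theta> x = (\<Inter>s\<in>S. \<theta> a - \<theta> s)"
      using S x by (simp add: rep_complement_down subset_iff)
    moreover have "\<theta> x \<subseteq> \<theta> a" "\<forall>s\<in>S. \<theta> s \<subseteq> \<theta> a"
      using S x rep_subset_rep_top by auto
    ultimately show ?thesis
      by (rule UN_eq_if_Diff_eq_INT_Diff)
  qed
qed

end

end

theorem lemma3p3:
  fixes \<sigma> :: "opsym set" and A :: "'a palg" and \<theta>0 :: "'a \<Rightarrow> ('b \<times> 'b) set" and a :: 'a
  assumes "ARes \<in> \<sigma>"
    and "is_rep \<sigma> A \<theta>0"
    and "a \<in> carrier A"
  shows "boolean_alg (down A a) (lres A) (\<lambda>b. ares A b a) (zero A a) a \<and>
         (\<forall>\<theta> :: 'a \<Rightarrow> ('c \<times> 'c) set. is_rep \<sigma> A \<theta> \<longrightarrow>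
           inj_on \<theta> (down A a) \<and>
           (\<forall>b\<in>down A a. \<theta> b \<subseteq> \<theta> a) \<and>
           (\<forall>b\<in>down A a. \<forall>c\<in>down A a. \<theta> (lres A b c) = \<theta> b \<inter> \<theta> c) \<and>
           (\<forall>b\<in>down A a. \<theta> (ares A b a) = \<theta> a - \<theta> b) \<and>
           \<theta> (zero A a) = {} \<and>
           ((meet_complete A \<theta> \<or> (Mt \<in> \<sigma> \<and> join_complete A \<theta>)) \<longrightarrow>
              (\<forall>S x. S \<subseteq> down A a \<longrightarrow> S \<noteq> {} \<longrightarrow> is_glb_in A (down A a) S x \<longrightarrow>
                 \<theta> x = (\<Inter>s\<in>S. \<theta> s)) \<and>
              (\<forall>S x. S \<subseteq> down A a \<longrightarrow> is_lub_in A (down A a) S x \<longrightarrow>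
                 \<theta> x = (\<Union>s\<in>S. \<theta> s))))"
proof (intro conjI allI impI)
  interpret \<theta>0: ares_representation \<sigma> A \<theta>0
    using assms(1,2) by unfold_locales
  show "boolean_alg (down A a) (lres A) (\<lambda>b. ares A b a) (zero A a) a"
    using \<theta>0.boolean_alg_down[OF assms(3)] .
next
  fix \<theta> :: "'a \<Rightarrow> ('c \<times> 'c) set"
  assume "is_rep \<sigma> A \<theta>"
  then interpret \<theta>: ares_representation \<sigma> A \<theta>
    using assms(1) by unfold_locales
  note a = assms(3)
  show "inj_on \<theta> (down A a)"
    using \<theta>.inj_on_rep \<theta>.down_subset_carrier[OF a] by (rule inj_on_subset)
  show "\<forall>b\<in>down A a. \<theta> b \<subseteq> \<theta> a"
    using \<theta>.rep_subset_rep_top[OF a] by blast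
  show "\<forall>b\<in>down A a. \<forall>c\<in>down A a. \<theta> (lres A b c) = \<theta> b \<inter> \<theta> c"
    using \<theta>.rep_lres_down[OF a] by blast
  show "\<forall>b\<in>down A a. \<theta> (ares A b a) = \<theta> a - \<theta> b"
    using \<theta>.rep_complement_down[OF a] by blast
  show "\<theta> (zero A a) = {}"
    using \<theta>.rep_zero[OF a] .
  show "\<theta> x = (\<Inter>s\<in>S. \<theta> s)"
    if "meet_complete A \<theta> \<or> Mt \<in> \<sigma> \<and> join_complete A \<theta>"
      and "S \<subseteq> down A a" "S \<noteq> {}" "is_glb_in A (down A a) S x" for S x
    using \<theta>.rep_is_glb_in_down[OF a that] .
  show "\<theta> x = (\<Union>s\<in>S. \<theta> s)"
    if "meet_complete A \<theta> \<or> Mt \<in> \<sigma> \<and> join_complete A \<theta>"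
      and "S \<subseteq> down A a" "is_lub_in A (down A a) S x" for S x
    using \<theta>.rep_is_lub_in_down[OF a that] .
qed

end
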